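(* Let $(X,d)$ be a compact metric space, let $\{f_n\}_{n\in\mathbb{N}}$ be a sequence of homeomorphisms of $X$ and let $f$ be a homeomorphism of $X$ such that $f_n\to f$ uniformly and $f_n^{-1}\to f^{-1}$ uniformly on $X$. Then for $x\in X$: (1) $x\in U_f(X)$ if and only if there exists $\delta>0$ such that for every pair of distinct points $y,z\in B(x,\delta)$, $\bigcup_{m\ge 1}\bigcap_{n\ge m}E_z(f_n,y,\delta)\neq\emptyset$; (2) $x\in M_f(X)$ if and only if there exists $\delta>0$ such that for each $y\in B(x,\delta)$ and every pair of distinct points $u,v\in\overline{\mathcal{O}_f(y)}$, $\bigcup_{m\ge 1}\bigcap_{n\ge m}E_v(f_n,u,\delta)\neq\emptyset$.
   Context: For a homeomorphism $f$ of a compact metric space $(X,d)$: $B(x,\epsilon)=\{y: d(x,y)<\epsilon\}$, $\mathcal{O}_f(x)=\{f^n(x):n\in\mathbb{Z}\}$, and for $x,y\in X$, $\epsilon>0$, $E_y(f,x,\epsilon)=\{n\in\mathbb{Z}: d(f^n(x),f^n(y))>\epsilon\}$ (negative powers are iterates of $f^{-1}$). $f$ is expansive on a subset $A\subset X$ with expansivity constant $\mathfrak{c}>0$ if for every pair of distinct $x,y\in A$ there is $n\in\mathbb{Z}$ with $d(f^n(x),f^n(y))>\mathfrak{c}$. $U_f(X)$ is the set of points $x$ for which there is $\mathfrak{c}>0$ such that $f$ is expansive on $B(x,\mathfrak{c})$ with constant $\mathfrak{c}$. $M_f(X)$ is the set of points $x$ for which there is $\mathfrak{c}>0$ such that for every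 $y\in B(x,\mathfrak{c})$, $f$ is expansive on $\overline{\mathcal{O}_f(y)}$ with constant $\mathfrak{c}$. *)

theory Defs
  imports "HOL-Analysis.Analysis"
begin

definition zpow :: "('a \<Rightarrow> 'a) \<Rightarrow> int \<Rightarrow> 'a \<Rightarrow> 'a" where
  "zpow f n = (if 0 \<le> n then f ^^ nat n else inv f ^^ nat (- n))"

definition orbit :: "('a \<Rightarrow> 'a) \<Rightarrow> 'a \<Rightarrow> 'a set" where
  "orbit f x = {zpow f n x | n. True}"

definition Eset :: "('a \<Rightarrow> 'a) \<Rightarrow> 'a \<Rightarrow> 'a::metric_space \<Rightarrow> real \<Rightarrow> int set" where
  "Eset f y x eps = {n. dist (zpow f n x) (zpow f n y) > eps}"

definition expansive_on :: "('a::metric_space \<Rightarrow> 'a) \<Rightarrow> 'a set \<Rightarrow> real \<Rightarrow> bool" where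
  "expansive_on f A c \<longleftrightarrow> c > 0 \<and>
     (\<forall>x\<in>A. \<forall>y\<in>A. x \<noteq> y \<longrightarrow> (\<exists>n::int. dist (zpow f n x) (zpow f n y) > c))"

definition U_set :: "('a::metric_space \<Rightarrow> 'a) \<Rightarrow> 'a set" where
  "U_set f = {x. \<exists>c>0. expansive_on f (ball x c) c}"

definition M_set :: "('a::metric_space \<Rightarrow> 'a) \<Rightarrow> 'a set" where
  "M_set f = {x. \<exists>c>0. \<forall>y\<in>ball x c. expansive_on f (closure (orbit f y)) c}"

end

theory Submission
  imports Defs
begin

(*
  Uniform convergence of the maps and of their inverses, together with continuity of the limit,
  makes every integer iterate converge pointwise: f_n^k p tends to f^k p. Hence a separation
  d(f^k y, f^k z) > c of the limit persists for all large n, while a separation by more than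
  delta for all large n survives in the limit as a separation by at least delta, hence by more
  than delta/2. Both characterisations follow by passing between the constants delta and
  delta/2 and between the balls of these radii.
*)

lemma tendsto_uniform_limit_compose:
  assumes "uniform_limit UNIV gs g F" and "(a \<longlongrightarrow> L) F" and "isCont g L"
  shows "((\<lambda>n. gs n (a n)) \<longlongrightarrow> g L) F"
proof (rule tendstoI)
  fix e :: real
  assume "e > 0"
  then have "\<forall>\<^sub>F n in F. \<forall>x\<in>UNIV. dist (gs n x) (g x) < e/2"
    using assms(1) by (intro uniform_limitD) auto
  moreover have "\<forall>\<^sub>F n in F. dist (g (a n)) (g L) < e/2"
    using \<open>e > 0\<close> by (intro tendstoD isCont_tendsto_compose[OF assms(3,2)]) auto
  ultimately show "\<forall>\<^sub>F n in F. dist (gs n (a n)) (g L) < e"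
    by eventually_elim (metis UNIV_I dist_triangle_half_r dist_commute)
qed

lemma tendsto_funpow_uniform_limit:
  fixes gs :: "'b \<Rightarrow> 'a::metric_space \<Rightarrow> 'a"
  assumes "uniform_limit UNIV gs g F" and "continuous_on UNIV g"
  shows "((\<lambda>n. (gs n ^^ m) p) \<longlongrightarrow> (g ^^ m) p) F"
proof (induction m)
  case 0
  show ?case by simp
next
  case (Suc m)
  have "isCont g ((g ^^ m) p)"
    using assms(2) by (simp add: continuous_on_eq_continuous_at)
  with Suc show ?case
    by (simp add: tendsto_uniform_limit_compose[OF assms(1)])
qed

lemma tendsto_zpow_uniform_limit:
  fixes fs :: "'b \<Rightarrow> 'a::metric_space \<Rightarrow> 'a"
  assumes "continuous_on UNIV f" and "continuous_on UNIV (inv f)"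
    and "uniform_limit UNIV fs f F"
    and "uniform_limit UNIV (\<lambda>n. inv (fs n)) (inv f) F"
  shows "((\<lambda>n. zpow (fs n) k p) \<longlongrightarrow> zpow f k p) F"
  using tendsto_funpow_uniform_limit[OF assms(3,1)] tendsto_funpow_uniform_limit[OF assms(4,2)]
  by (simp add: zpow_def)

lemma UN_INT_atLeast_nonempty_iff:
  fixes A :: "nat \<Rightarrow> 'a set"
  shows "(\<Union>m\<in>{1..}. \<Inter>n\<in>{m..}. A n) \<noteq> {} \<longleftrightarrow> (\<exists>k. \<forall>\<^sub>F n in sequentially. k \<in> A n)"
proof
  assume "\<exists>k. \<forall>\<^sub>F n in sequentially. k \<in> A n"
  then obtain k N where "\<And>n. n \<ge> N \<Longrightarrow> k \<in> A n"
    by (auto simp: eventually_sequentially)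
  then have "k \<in> (\<Union>m\<in>{1..}. \<Inter>n\<in>{m..}. A n)"
    by (intro UN_I[of "max N 1"]) auto
  then show "(\<Union>m\<in>{1..}. \<Inter>n\<in>{m..}. A n) \<noteq> {}" by auto
next
  assume "(\<Union>m\<in>{1..}. \<Inter>n\<in>{m..}. A n) \<noteq> {}"
  then obtain k where "k \<in> (\<Union>m\<in>{1..}. \<Inter>n\<in>{m..}. A n)" by auto
  then obtain m where "\<And>n. n \<ge> m \<Longrightarrow> k \<in> A n" by auto
  then show "\<exists>k. \<forall>\<^sub>F n in sequentially. k \<in> A n"
    unfolding eventually_sequentially by auto
qed

lemma expansive_on_imp_eventually_separated:
  fixes fs :: "nat \<Rightarrow> 'a::metric_space \<Rightarrow> 'a"
  assumes conv: "\<And>k p. (\<lambda>n. zpow (fs n) k p) \<longlonglongrightarrow> zpow f k p"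
    and "expansive_on f A c" and "y \<in> A" and "z \<in> A" and "y \<noteq> z"
  shows "(\<Union>m\<in>{1..}. \<Inter>n\<in>{m..}. Eset (fs n) z y c) \<noteq> {}"
proof -
  obtain k where "dist (zpow f k y) (zpow f k z) > c"
    using assms(2-5) unfolding expansive_on_def by blast
  then have "\<forall>\<^sub>F n in sequentially. dist (zpow (fs n) k y) (zpow (fs n) k z) > c"
    by (rule order_tendstoD(1)[OF tendsto_dist[OF conv conv]])
  then show ?thesis
    unfolding UN_INT_atLeast_nonempty_iff Eset_def by auto
qed

lemma expansive_on_if_eventually_separated:
  fixes fs :: "nat \<Rightarrow> 'a::metric_space \<Rightarrow> 'a"
  assumes conv: "\<And>k p. (\<lambda>n. zpow (fs n) k p) \<longlonglongrightarrow> zpow f k p"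
    and sep: "\<And>y z. y \<in> A \<Longrightarrow> z \<in> A \<Longrightarrow> y \<noteq> z \<Longrightarrow>
                 (\<Union>m\<in>{1..}. \<Inter>n\<in>{m..}. Eset (fs n) z y \<delta>) \<noteq> {}"
    and "0 < c" and "c < \<delta>"
  shows "expansive_on f A c"
  unfolding expansive_on_def
proof (intro conjI ballI impI)
  fix y z
  assume "y \<in> A" "z \<in> A" "y \<noteq> z"
  then obtain k where "\<forall>\<^sub>F n in sequentially. dist (zpow (fs n) k y) (zpow (fs n) k z) > \<delta>"
    using sep[OF \<open>y \<in> A\<close> \<open>z \<in> A\<close> \<open>y \<noteq> z\<close>]
    unfolding UN_INT_atLeast_nonempty_iff Eset_def by auto
  then have "dist (zpow f k y) (zpow f k z) \<ge> \<delta>"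
    by (intro tendsto_lowerbound[OF tendsto_dist[OF conv conv]]) (auto elim: eventually_mono)
  with \<open>c < \<delta>\<close> show "\<exists>k. dist (zpow f k y) (zpow f k z) > c"
    by (intro exI[of _ k]) simp
qed (fact \<open>0 < c\<close>)

lemma U_set_iff_eventually_separated:
  fixes fs :: "nat \<Rightarrow> 'a::metric_space \<Rightarrow> 'a"
  assumes conv: "\<And>k p. (\<lambda>n. zpow (fs n) k p) \<longlonglongrightarrow> zpow f k p"
  shows "x \<in> U_set f \<longleftrightarrow>
           (\<exists>\<delta>>0. \<forall>y\<in>ball x \<delta>. \<forall>z\<in>ball x \<delta>. y \<noteq> z \<longrightarrow>
              (\<Union>m\<in>{1..}. \<Inter>n\<in>{m..}. Eset (fs n) z y \<delta>) \<noteq> {})"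
proof
  assume "x \<in> U_set f"
  then obtain c where "c > 0" and exp: "expansive_on f (ball x c) c"
    by (auto simp: U_set_def)
  show "\<exists>\<delta>>0. \<forall>y\<in>ball x \<delta>. \<forall>z\<in>ball x \<delta>. y \<noteq> z \<longrightarrow>
          (\<Union>m\<in>{1..}. \<Inter>n\<in>{m..}. Eset (fs n) z y \<delta>) \<noteq> {}"
    by (intro exI[of _ c] conjI ballI impI \<open>c > 0\<close>
          expansive_on_imp_eventually_separated[OF conv exp])
next
  assume "\<exists>\<delta>>0. \<forall>y\<in>ball x \<delta>. \<forall>z\<in>ball x \<delta>. y \<noteq> z \<longrightarrow>
            (\<Union>m\<in>{1..}. \<Inter>n\<in>{m..}. Eset (fs n) z y \<delta>) \<noteq> {}"
  then obtain \<delta> where "\<delta> > 0" and sep: "\<forall>y\<in>ball x \<delta>. \<forall>z\<in>ball x \<delta>. y \<noteq> z \<longrightarrow>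
            (\<Union>m\<in>{1..}. \<Inter>n\<in>{m..}. Eset (fs n) z y \<delta>) \<noteq> {}"
    by (elim exE conjE) (rule that)
  have "ball x (\<delta>/2) \<subseteq> ball x \<delta>"
    using \<open>\<delta> > 0\<close> by (intro subset_ball) simp
  have "expansive_on f (ball x (\<delta>/2)) (\<delta>/2)"
  proof (rule expansive_on_if_eventually_separated[OF conv, where \<delta> = \<delta>])
    fix y z
    assume "y \<in> ball x (\<delta>/2)" "z \<in> ball x (\<delta>/2)" "y \<noteq> z"
    with \<open>ball x (\<delta>/2) \<subseteq> ball x \<delta>\<close> have "y \<in> ball x \<delta>" "z \<in> ball x \<delta>" "y \<noteq> z"
      by blast+
    then show "(\<Union>m\<in>{1..}. \<Inter>n\<in>{m..}. Eset (fs n) z y \<delta>) \<noteq> {}"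
      by (rule sep[rule_format])
  qed (use \<open>\<delta> > 0\<close> in simp_all)
  with \<open>\<delta> > 0\<close> show "x \<in> U_set f"
    unfolding U_set_def by (intro CollectI exI[of _ "\<delta>/2"]) simp
qed

lemma M_set_iff_eventually_separated:
  fixes fs :: "nat \<Rightarrow> 'a::metric_space \<Rightarrow> 'a"
  assumes conv: "\<And>k p. (\<lambda>n. zpow (fs n) k p) \<longlonglongrightarrow> zpow f k p"
  shows "x \<in> M_set f \<longleftrightarrow>
           (\<exists>\<delta>>0. \<forall>y\<in>ball x \<delta>. \<forall>u\<in>closure (orbit f y). \<forall>v\<in>closure (orbit f y). u \<noteq> v \<longrightarrow>
              (\<Union>m\<in>{1..}. \<Inter>n\<in>{m..}. Eset (fs n) v u \<delta>) \<noteq> {})"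
proof
  assume "x \<in> M_set f"
  then obtain c where "c > 0" and exp: "\<forall>y\<in>ball x c. expansive_on f (closure (orbit f y)) c"
    by (auto simp: M_set_def)
  show "\<exists>\<delta>>0. \<forall>y\<in>ball x \<delta>. \<forall>u\<in>closure (orbit f y). \<forall>v\<in>closure (orbit f y). u \<noteq> v \<longrightarrow>
          (\<Union>m\<in>{1..}. \<Inter>n\<in>{m..}. Eset (fs n) v u \<delta>) \<noteq> {}"
    by (intro exI[of _ c] conjI ballI impI \<open>c > 0\<close>
          expansive_on_imp_eventually_separated[OF conv exp[rule_format]])
next
  assume "\<exists>\<delta>>0. \<forall>y\<in>ball x \<delta>. \<forall>u\<in>closure (orbit f y). \<forall>v\<in>closure (orbit f y). u \<noteq> v \<longrightarrow>
            (\<Union>m\<in>{1..}. \<Inter>n\<in>{m..}. Eset (fs n) v u \<delta>) \<noteq> {}"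
  then obtain \<delta> where "\<delta> > 0" and sep: "\<forall>y\<in>ball x \<delta>. \<forall>u\<in>closure (orbit f y).
            \<forall>v\<in>closure (orbit f y). u \<noteq> v \<longrightarrow> (\<Union>m\<in>{1..}. \<Inter>n\<in>{m..}. Eset (fs n) v u \<delta>) \<noteq> {}"
    by (elim exE conjE) (rule that)
  have "ball x (\<delta>/2) \<subseteq> ball x \<delta>"
    using \<open>\<delta> > 0\<close> by (intro subset_ball) simp
  have "expansive_on f (closure (orbit f y)) (\<delta>/2)" if "y \<in> ball x (\<delta>/2)" for y
  proof (rule expansive_on_if_eventually_separated[OF conv, where \<delta> = \<delta>])
    fix u v
    have "y \<in> ball x \<delta>"
      using that \<open>ball x (\<delta>/2) \<subseteq> ball x \<delta>\<close> by blast
    moreover assume "u \<in> closure (orbit f y)" "v \<in> closure (orbit f y)" "u \<noteq> v"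
    ultimately show "(\<Union>m\<in>{1..}. \<Inter>n\<in>{m..}. Eset (fs n) v u \<delta>) \<noteq> {}"
      by (rule sep[rule_format])
  qed (use \<open>\<delta> > 0\<close> in simp_all)
  with \<open>\<delta> > 0\<close> show "x \<in> M_set f"
    unfolding M_set_def by (intro CollectI exI[of _ "\<delta>/2"]) simp
qed

theorem theorem2p4:
  fixes fs :: "nat \<Rightarrow> 'a::metric_space \<Rightarrow> 'a" and f :: "'a \<Rightarrow> 'a" and x :: 'a
  assumes "compact (UNIV :: 'a set)"
    and "\<And>n. homeomorphism UNIV UNIV (fs n) (inv (fs n))"
    and "homeomorphism UNIV UNIV f (inv f)"
    and "uniform_limit UNIV fs f sequentially"
    and "uniform_limit UNIV (\<lambda>n. inv (fs n)) (inv f) sequentially"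
  shows "(x \<in> U_set f \<longleftrightarrow>
            (\<exists>\<delta>>0. \<forall>y\<in>ball x \<delta>. \<forall>z\<in>ball x \<delta>. y \<noteq> z \<longrightarrow>
               (\<Union>m\<in>{1..}. \<Inter>n\<in>{m..}. Eset (fs n) z y \<delta>) \<noteq> {}))
       \<and> (x \<in> M_set f \<longleftrightarrow>
            (\<exists>\<delta>>0. \<forall>y\<in>ball x \<delta>. \<forall>u\<in>closure (orbit f y). \<forall>v\<in>closure (orbit f y). u \<noteq> v \<longrightarrow>
               (\<Union>m\<in>{1..}. \<Inter>n\<in>{m..}. Eset (fs n) v u \<delta>) \<noteq> {}))"
proof -
  have "continuous_on UNIV f" "continuous_on UNIV (inv f)"
    using assms(3) by (auto simp: homeomorphism_def)
  then have conv: "\<And>k p. (\<lambda>n. zpow (fs n) k p) \<longlonglongrightarrow> zpow f k p"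
    using assms(4,5) by (rule tendsto_zpow_uniform_limit)
  show ?thesis
    by (rule conjI[OF U_set_iff_eventually_separated[OF conv] M_set_iff_eventually_separated[OF conv]])
qed

end
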